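(* Let $Y_0$ and $Y_1$ be real-valued random variables on a common probability space, with marginal cumulative distribution functions $F_0$ and $F_1$, and let $Q_j(u)=\inf\{y\in\mathbb{R}: F_j(y)\geq u\}$, $j\in\{0,1\}$, be their left-continuous generalized inverses. Let $U\sim U(0,1)$ be a random variable on the same space with $Y_0=Q_0(U)$ (the joint distribution of $(U,Y_1)$ is otherwise arbitrary). Let $f:\mathbb{R}\to\mathbb{R}$ be a nondecreasing convex function and $g:\mathbb{R}\to\mathbb{R}$ a nonincreasing convex function. Then for every $0\leq a<b\leq 1$, \[ \int_a^b f(Q_1(u-a)-Q_0(u))\,du\leq\mathbb{E}[f(Y_1-Y_0)\mathbbm{1}\{a<U<b\}]\leq\int_a^b f(Q_1(1-u+a)-Q_0(u))\,du, \] \[ \int_a^b g(Q_1(1-b+u)-Q_0(u))\,du\leq\mathbb{E}[g(Y_1-Y_0)\mathbbm{1}\{a<U<b\}]\leq\int_a^b g(Q_1(b-u)-Q_0(u))\,du. \]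
   Context: $\mathbbm{1}\{\cdot\}$ denotes the indicator of an event. *)

theory Defs
  imports "HOL-Probability.Probability"
begin

text \<open>Left-continuous generalized inverse of a distribution function F:
  Q(u) = inf {y. F y \<ge> u}.  (Used only for u in (0,1), where it is a finite real.)\<close>
definition quantile :: "(real \<Rightarrow> real) \<Rightarrow> real \<Rightarrow> real" where
  "quantile F u = Inf {y. F y \<ge> u}"

end

theory Submission
  imports Defs
begin

text \<open>
  A convex \<open>\<phi>\<close> is the integral of its right derivative \<open>D\<close>, which is monotone:
  \<open>\<phi> (y - q) - \<phi> (r - q) = \<integral> (1{t < y} - 1{t < r}) D (t - q) dt\<close>.
  Take \<open>y = Y\<^sub>1\<close>, \<open>q = Q\<^sub>0 U = Y\<^sub>0\<close> and \<open>r = \<rho> U\<close>, where \<open>\<rho>\<close> is one of the four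
  rearranged quantile functions of \<open>Y\<^sub>1\<close> in the theorem. Since \<open>U\<close> is uniform, Fubini turns the
  difference between \<open>E[\<phi> (Y\<^sub>1 - Y\<^sub>0); a < U < b]\<close> and \<open>\<integral>\<^sub>a\<^sup>b \<phi> (\<rho> u - Q\<^sub>0 u) du\<close> into
  \<open>\<integral> E[(1{t < Y\<^sub>1} - 1{t < \<rho> U}) D (t - Q\<^sub>0 U); a < U < b] dt\<close>.
  For fixed \<open>t\<close> the weight \<open>D (t - Q\<^sub>0 u)\<close> is monotone in \<open>u\<close>, and by the Galois connection
  between \<open>Q\<^sub>1\<close> and \<open>F\<^sub>1\<close> the event \<open>t < \<rho> U\<close> means that \<open>U\<close> lies in an end segment
  of \<open>(a, b)\<close> of length determined by \<open>F\<^sub>1 t\<close>. Each \<open>\<rho>\<close> puts this segment at the end where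
  the weight is smallest or largest, so the bathtub principle fixes the sign of every inner
  expectation, whatever the joint law of \<open>(U, Y\<^sub>1)\<close>.
\<close>

section \<open>Convex functions as integrals of their right derivative\<close>

lemma convex_on_slope_mono:
  fixes f :: "real \<Rightarrow> real"
  assumes cvx: "convex_on UNIV f" and "x < y" "x' < y'" "x \<le> x'" "y \<le> y'"
  shows "(f y - f x) / (y - x) \<le> (f y' - f x') / (y' - x')"
proof -
  have swap: "(f u - f v) / (u - v) = (f v - f u) / (v - u)" for u v
    by (metis minus_diff_eq minus_divide_divide)
  have "(f y - f x) / (y - x) \<le> (f y' - f x) / (y' - x)"
  proof (cases "y = y'")
    case False
    with assms have "y < y'" by simp
    from convex_on_slope_le(1)[OF cvx UNIV_I UNIV_I \<open>x < y\<close> this] show ?thesis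
      by (simp add: swap)
  qed simp
  also have "\<dots> \<le> (f y' - f x') / (y' - x')"
  proof (cases "x = x'")
    case False
    with assms have "x < x'" by simp
    from convex_on_slope_le(2)[OF cvx UNIV_I UNIV_I this \<open>x' < y'\<close>] show ?thesis
      by (simp add: swap)
  qed simp
  finally show ?thesis .
qed

definition difference_quotient :: "(real \<Rightarrow> real) \<Rightarrow> real \<Rightarrow> real \<Rightarrow> real" where
  "difference_quotient f h t = (f (t + h) - f t) / h"

text \<open>For convex \<open>f\<close> the difference quotients decrease as \<open>h \<down> 0\<close>, so this is the right
  derivative of \<open>f\<close>, computed along \<open>h = 1 / (n + 1)\<close>.\<close>
definition right_deriv :: "(real \<Rightarrow> real) \<Rightarrow> real \<Rightarrow> real" where
  "right_deriv f t = (INF n. difference_quotient f (1 / Suc n) t)"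

lemma difference_quotient_mono:
  assumes "convex_on UNIV f" "0 < h" "h \<le> h'" "t \<le> t'"
  shows "difference_quotient f h t \<le> difference_quotient f h' t'"
  using convex_on_slope_mono[OF assms(1), of t "t + h" t' "t' + h'"] assms
  by (simp add: difference_quotient_def)

lemma difference_quotient_lower_bound:
  assumes "convex_on UNIV f" "0 < h"
  shows "f t - f (t - 1) \<le> difference_quotient f h t"
  using convex_on_slope_mono[OF assms(1), of "t - 1" t t "t + h"] assms
  by (simp add: difference_quotient_def)

lemma bdd_below_difference_quotients:
  assumes "convex_on UNIV f"
  shows "bdd_below (range (\<lambda>n. difference_quotient f (1 / Suc n) t))"
proof (rule bdd_belowI2)
  fix n :: nat
  show "f t - f (t - 1) \<le> difference_quotient f (1 / Suc n) t"
    by (rule difference_quotient_lower_bound[OF assms]) simp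
qed

lemma right_deriv_le_difference_quotient:
  assumes "convex_on UNIV f"
  shows "right_deriv f t \<le> difference_quotient f (1 / Suc n) t"
  unfolding right_deriv_def by (rule cINF_lower[OF bdd_below_difference_quotients[OF assms]]) simp

lemma mono_right_deriv:
  assumes "convex_on UNIV f"
  shows "mono (right_deriv f)"
proof
  fix t t' :: real
  assume "t \<le> t'"
  show "right_deriv f t \<le> right_deriv f t'"
    unfolding right_deriv_def[of f t']
  proof (rule cINF_greatest)
    fix n :: nat
    have "difference_quotient f (1 / Suc n) t \<le> difference_quotient f (1 / Suc n) t'"
      by (rule difference_quotient_mono[OF assms _ order_refl \<open>t \<le> t'\<close>]) simp
    then show "right_deriv f t \<le> difference_quotient f (1 / Suc n) t'"
      using right_deriv_le_difference_quotient[OF assms, of t n] by simp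
  qed simp
qed

lemma borel_measurable_right_deriv:
  "convex_on UNIV f \<Longrightarrow> right_deriv f \<in> borel_measurable borel"
  by (rule borel_measurable_mono[OF mono_right_deriv])

lemma LIMSEQ_right_deriv:
  assumes "convex_on UNIV f"
  shows "(\<lambda>n. difference_quotient f (1 / Suc n) t) \<longlonglongrightarrow> right_deriv f t"
  unfolding right_deriv_def
proof (rule LIMSEQ_decseq_INF)
  show "bdd_below (range (\<lambda>n. difference_quotient f (1 / Suc n) t))"
    by (rule bdd_below_difference_quotients[OF assms])
  show "decseq (\<lambda>n. difference_quotient f (1 / Suc n) t)"
    by (rule decseq_SucI, rule difference_quotient_mono[OF assms]) (auto simp: frac_le)
qed

lemma right_deriv_nonneg:
  assumes "convex_on UNIV f" "mono f"
  shows "0 \<le> right_deriv f t"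
  unfolding right_deriv_def
proof (rule cINF_greatest)
  fix n :: nat
  have "f t \<le> f (t + 1 / Suc n)"
    by (rule monoD[OF assms(2)]) simp
  then show "0 \<le> difference_quotient f (1 / Suc n) t"
    by (simp add: difference_quotient_def)
qed simp

lemma right_deriv_nonpos:
  assumes "convex_on UNIV f" "antimono f"
  shows "right_deriv f t \<le> 0"
proof -
  have "difference_quotient f 1 t \<le> 0"
    using antimonoD[OF assms(2), of t "t + 1"] by (simp add: difference_quotient_def)
  then show ?thesis
    using right_deriv_le_difference_quotient[OF assms(1), of t 0] by simp
qed

lemma right_deriv_shift: "right_deriv (\<lambda>s. f (s - c)) t = right_deriv f (t - c)"
  by (simp add: right_deriv_def difference_quotient_def algebra_simps)

lemma convex_on_shift:
  fixes f :: "real \<Rightarrow> real"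
  assumes "convex_on UNIV f"
  shows "convex_on UNIV (\<lambda>s. f (s - c))"
proof (rule convex_onI)
  fix \<mu> x y :: real
  assume "0 < \<mu>" "\<mu> < 1"
  have "(1 - \<mu>) *\<^sub>R x + \<mu> *\<^sub>R y - c = (1 - \<mu>) *\<^sub>R (x - c) + \<mu> *\<^sub>R (y - c)"
    by (simp add: algebra_simps)
  then show "f ((1 - \<mu>) *\<^sub>R x + \<mu> *\<^sub>R y - c) \<le> (1 - \<mu>) * f (x - c) + \<mu> * f (y - c)"
    using convex_onD[OF assms, of \<mu> "x - c" "y - c"] \<open>0 < \<mu>\<close> \<open>\<mu> < 1\<close> by simp
qed simp

lemma tendsto_integral_difference_quotient:
  fixes f :: "real \<Rightarrow> real"
  assumes cont: "\<And>t. isCont f t" and "x \<le> y"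
  shows "(\<lambda>n. \<integral>t. indicator {x..y} t * difference_quotient f (1 / Suc n) t \<partial>lborel) \<longlonglongrightarrow> f y - f x"
proof -
  obtain F where F: "(F has_real_derivative f t) (at t)" for t
    using einterval_antiderivative[of "-\<infinity>" "\<infinity>" f] cont
    by (auto simp: has_real_derivative_iff_has_vector_derivative)
  define h :: "nat \<Rightarrow> real" where "h n = 1 / Suc n" for n
  have h_pos: "0 < h n" for n
    by (simp add: h_def)
  text \<open>Each difference quotient of \<open>f\<close> is the derivative of a difference quotient of \<open>F\<close>.\<close>
  have integral: "(\<integral>t. indicator {x..y} t * difference_quotient f (h n) t \<partial>lborel)
      = difference_quotient F (h n) y - difference_quotient F (h n) x" for n
  proof -
    have "(difference_quotient F (h n) has_real_derivative difference_quotient f (h n) t) (at t)" for t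
    proof -
      have "((\<lambda>s. F (s + h n)) has_real_derivative f (t + h n)) (at t)"
        using F[of "t + h n"] by (simp add: DERIV_shift)
      from DERIV_cdivide[OF DERIV_diff[OF this F[of t]], of "h n"] show ?thesis
        by (simp add: difference_quotient_def[abs_def])
    qed
    moreover have "continuous_on {x..y} (difference_quotient f (h n))"
      unfolding difference_quotient_def
      by (intro continuous_at_imp_continuous_on ballI continuous_intros isCont_o2[OF _ cont])
        (use h_pos[of n] in auto)
    ultimately show ?thesis
      using \<open>x \<le> y\<close>
      by (subst integral_FTC_atLeastAtMost[symmetric])
        (auto simp: has_real_derivative_iff_has_vector_derivative intro: has_vector_derivative_at_within)
  qed
  have "h \<longlonglongrightarrow> 0"
    using LIMSEQ_inverse_real_of_nat by (simp add: h_def[abs_def] inverse_eq_divide)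
  then have "(\<lambda>n. difference_quotient F (h n) z) \<longlonglongrightarrow> f z" for z
    using F[of z] h_pos LIMSEQ_SEQ_conv[of 0 "\<lambda>k. difference_quotient F k z" "f z"]
    by (auto simp: DERIV_def difference_quotient_def dest: less_imp_neq[symmetric])
  then show ?thesis
    using tendsto_diff unfolding integral[unfolded h_def] h_def by blast
qed

lemma convex_on_integral_right_deriv:
  fixes f :: "real \<Rightarrow> real"
  assumes cvx: "convex_on UNIV f" and "x \<le> y"
  shows "set_integrable lborel {x..y} (right_deriv f)"
    and "(LINT t:{x..y}|lborel. right_deriv f t) = f y - f x"
proof -
  have [measurable]: "f \<in> borel_measurable borel" "right_deriv f \<in> borel_measurable borel"
    using convex_on_continuous[OF open_UNIV cvx] borel_measurable_right_deriv[OF cvx]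
    by (auto intro: borel_measurable_continuous_onI)
  define D where "D n t = indicator {x..y} t * difference_quotient f (1 / Suc n) t" for n t
  define C where "C = \<bar>f x - f (x - 1)\<bar> + \<bar>difference_quotient f 1 y\<bar>"
  have bound: "norm (D n t) \<le> indicator {x..y} t * C" for n t
  proof (cases "t \<in> {x..y}")
    case True
    have "f x - f (x - 1) \<le> f t - f (t - 1)"
      using convex_on_slope_mono[OF cvx, of "x - 1" x "t - 1" t] True by simp
    also have "\<dots> \<le> difference_quotient f (1 / Suc n) t"
      by (rule difference_quotient_lower_bound[OF cvx]) simp
    finally have "f x - f (x - 1) \<le> difference_quotient f (1 / Suc n) t" .
    moreover have "difference_quotient f (1 / Suc n) t \<le> difference_quotient f 1 y"
      by (rule difference_quotient_mono[OF cvx]) (use True in auto)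
    ultimately show ?thesis
      using True by (auto simp: D_def C_def)
  qed (simp add: D_def)
  have dominating: "integrable lborel (\<lambda>t. indicator {x..y} t * C)"
    by (intro integrable_mult_left integrable_real_indicator) (auto simp: emeasure_lborel_Icc_eq)
  have D_measurable: "D n \<in> borel_measurable lborel" for n
    unfolding D_def difference_quotient_def by measurable
  have D_lim: "AE t in lborel. (\<lambda>n. D n t) \<longlonglongrightarrow> indicator {x..y} t * right_deriv f t"
    unfolding D_def by (intro AE_I2 tendsto_mult_left LIMSEQ_right_deriv[OF cvx])
  have "integrable lborel (\<lambda>t. indicator {x..y} t * right_deriv f t)"
    by (rule integrable_dominated_convergence[OF _ D_measurable dominating D_lim]) (use bound in auto)
  moreover have "(\<lambda>n. \<integral>t. D n t \<partial>lborel) \<longlonglongrightarrow> (\<integral>t. indicator {x..y} t * right_deriv f t \<partial>lborel)"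
    by (rule integral_dominated_convergence[OF _ D_measurable dominating D_lim]) (use bound in auto)
  moreover have "(\<lambda>n. \<integral>t. D n t \<partial>lborel) \<longlonglongrightarrow> f y - f x"
    unfolding D_def using convex_on_continuous[OF open_UNIV cvx] \<open>x \<le> y\<close>
    by (intro tendsto_integral_difference_quotient) (auto simp: continuous_on_eq_continuous_at)
  ultimately show "set_integrable lborel {x..y} (right_deriv f)"
    and "(LINT t:{x..y}|lborel. right_deriv f t) = f y - f x"
    using LIMSEQ_unique by (auto simp: set_integrable_def set_lebesgue_integral_def)
qed

lemma convex_on_diff_has_integral_right_deriv:
  fixes f :: "real \<Rightarrow> real"
  assumes cvx: "convex_on UNIV f"
  shows "has_bochner_integral lborel
    (\<lambda>t. (of_bool (t < y) - of_bool (t < x)) * right_deriv f t) (f y - f x)"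
proof -
  have [measurable]: "right_deriv f \<in> borel_measurable borel"
    by (rule borel_measurable_right_deriv[OF cvx])
  have ordered: "has_bochner_integral lborel
    (\<lambda>t. (of_bool (t < y) - of_bool (t < x)) * right_deriv f t) (f y - f x)" if "x \<le> y" for x y
  proof -
    have "has_bochner_integral lborel (\<lambda>t. indicator {x..y} t * right_deriv f t) (f y - f x)"
      using convex_on_integral_right_deriv[OF cvx that]
      by (simp add: has_bochner_integral_iff set_integrable_def set_lebesgue_integral_def)
    moreover have "AE t in lborel. indicator {x..y} t * right_deriv f t
        = (of_bool (t < y) - of_bool (t < x)) * right_deriv f t"
      using AE_lborel_singleton[of y] by eventually_elim (use that in \<open>auto simp: indicator_def\<close>)
    ultimately show ?thesis
      by (subst (asm) has_bochner_integral_cong_AE) auto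
  qed
  show ?thesis
  proof (cases "x \<le> y")
    case False
    from has_bochner_integral_minus[OF ordered[of y x]] False show ?thesis
      by (simp add: algebra_simps)
  qed (rule ordered)
qed

lemma convex_on_diff_has_integral_shifted_right_deriv:
  fixes f :: "real \<Rightarrow> real"
  assumes "convex_on UNIV f"
  shows "has_bochner_integral lborel
    (\<lambda>t. (of_bool (t < y) - of_bool (t < x)) * right_deriv f (t - c)) (f (y - c) - f (x - c))"
  using convex_on_diff_has_integral_right_deriv[OF convex_on_shift[OF assms, of c], of y x]
  by (simp add: right_deriv_shift)

text \<open>For monotone \<open>f\<close> the integrand has constant sign.\<close>
lemma monotone_convex_on_diff_has_integral_abs:
  fixes f :: "real \<Rightarrow> real"
  assumes cvx: "convex_on UNIV f" and "mono f \<or> antimono f"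
  shows "has_bochner_integral lborel
    (\<lambda>t. \<bar>(of_bool (t < y) - of_bool (t < x)) * right_deriv f (t - c)\<bar>) \<bar>f (y - c) - f (x - c)\<bar>"
proof -
  define k where "k t = (of_bool (t < y) - of_bool (t < x)) * right_deriv f (t - c)" for t
  have k: "has_bochner_integral lborel k (f (y - c) - f (x - c))"
    unfolding k_def by (rule convex_on_diff_has_integral_shifted_right_deriv[OF cvx])
  have "(\<forall>t. 0 \<le> right_deriv f t) \<or> (\<forall>t. right_deriv f t \<le> 0)"
    using assms right_deriv_nonneg right_deriv_nonpos by blast
  then have "(\<forall>t. 0 \<le> k t) \<or> (\<forall>t. k t \<le> 0)"
    unfolding k_def by (cases "x \<le> y") (auto simp: zero_le_mult_iff mult_le_0_iff)
  then show ?thesis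
  proof
    assume "\<forall>t. 0 \<le> k t"
    moreover from this have "0 \<le> f (y - c) - f (x - c)"
      using k Bochner_Integration.integral_nonneg[of lborel k] by (simp add: has_bochner_integral_iff)
    ultimately show ?thesis
      using k by (simp add: k_def[symmetric])
  next
    assume "\<forall>t. k t \<le> 0"
    moreover from this have "f (y - c) - f (x - c) \<le> 0"
      using k Bochner_Integration.integral_nonneg[of lborel "\<lambda>t. - k t"]
      by (simp add: has_bochner_integral_iff)
    ultimately show ?thesis
      using has_bochner_integral_minus[OF k] by (simp add: k_def[symmetric] abs_of_nonpos)
  qed
qed

lemma integral_convex_increment_eq_integral_right_deriv:
  fixes M :: "'a measure" and Z X Y R :: "'a \<Rightarrow> real" and f :: "real \<Rightarrow> real"
  assumes "sigma_finite_measure M"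
    and [measurable]: "Z \<in> borel_measurable M" "X \<in> borel_measurable M"
      "Y \<in> borel_measurable M" "R \<in> borel_measurable M"
    and cvx: "convex_on UNIV f" and monotone: "mono f \<or> antimono f"
    and integrable: "integrable M (\<lambda>\<omega>. Z \<omega> * (f (Y \<omega> - X \<omega>) - f (R \<omega> - X \<omega>)))"
  shows "(\<integral>\<omega>. Z \<omega> * (f (Y \<omega> - X \<omega>) - f (R \<omega> - X \<omega>)) \<partial>M)
    = (\<integral>t. (\<integral>\<omega>. Z \<omega> * ((of_bool (t < Y \<omega>) - of_bool (t < R \<omega>)) * right_deriv f (t - X \<omega>)) \<partial>M) \<partial>lborel)"
proof -
  interpret sigma_finite_measure M by fact
  interpret pair_sigma_finite M lborel ..
  have [measurable]: "right_deriv f \<in> borel_measurable borel"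
    by (rule borel_measurable_right_deriv[OF cvx])
  define K where "K \<omega> t = Z \<omega> * ((of_bool (t < Y \<omega>) - of_bool (t < R \<omega>)) * right_deriv f (t - X \<omega>))"
    for \<omega> t
  define H where "H \<omega> = Z \<omega> * (f (Y \<omega> - X \<omega>) - f (R \<omega> - X \<omega>))" for \<omega>
  have K_measurable: "(\<lambda>(\<omega>, t). K \<omega> t) \<in> borel_measurable (M \<Otimes>\<^sub>M lborel)"
    unfolding K_def by measurable
  have K: "has_bochner_integral lborel (K \<omega>) (H \<omega>)" for \<omega>
    unfolding K_def H_def
    by (intro has_bochner_integral_mult_right convex_on_diff_has_integral_shifted_right_deriv[OF cvx])
  have "has_bochner_integral lborel (\<lambda>t. norm (K \<omega> t)) (norm (H \<omega>))" for \<omega>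
    unfolding K_def H_def real_norm_def abs_mult[of "Z \<omega>"]
    by (intro has_bochner_integral_mult_right monotone_convex_on_diff_has_integral_abs[OF cvx monotone])
  then have "integrable M (\<lambda>\<omega>. \<integral>t. norm (K \<omega> t) \<partial>lborel)"
    using integrable_norm[OF integrable] by (simp add: has_bochner_integral_iff H_def)
  then have "integrable (M \<Otimes>\<^sub>M lborel) (\<lambda>(\<omega>, t). K \<omega> t)"
    using K by (intro Fubini_integrable[OF K_measurable]) (auto simp: has_bochner_integral_iff)
  then have "(\<integral>t. (\<integral>\<omega>. K \<omega> t \<partial>M) \<partial>lborel) = (\<integral>\<omega>. (\<integral>t. K \<omega> t \<partial>lborel) \<partial>M)"
    by (rule Fubini_integral)
  also have "\<dots> = (\<integral>\<omega>. H \<omega> \<partial>M)"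
    using K by (simp add: has_bochner_integral_iff)
  finally show ?thesis
    by (simp add: K_def H_def)
qed

section \<open>The bathtub principle\<close>

lemma bathtub_integral_nonneg:
  fixes W :: "'a \<Rightarrow> real"
  assumes "finite_measure M" and [measurable]: "A \<in> sets M" "B \<in> sets M"
    and nonneg: "\<And>\<omega>. \<omega> \<in> space M \<Longrightarrow> 0 \<le> W \<omega>"
    and heavy: "\<And>\<omega> \<omega>'. \<omega> \<in> A \<Longrightarrow> \<omega>' \<in> space M - A \<Longrightarrow> W \<omega>' \<le> W \<omega>"
    and measure_le: "measure M B \<le> measure M A"
  shows "0 \<le> (\<integral>\<omega>. W \<omega> * (indicator A \<omega> - indicator B \<omega>) \<partial>M)"
proof (cases "integrable M (\<lambda>\<omega>. W \<omega> * (indicator A \<omega> - indicator B \<omega>))")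
  case False
  then show ?thesis
    by (simp add: not_integrable_integral_eq)
next
  case integrable: True
  interpret finite_measure M by fact
  show ?thesis
  proof (cases "A = {}")
    case True
    with measure_le have "measure M B = 0"
      by (simp add: measure_le_0_iff)
    then have "B \<in> null_sets M"
      by (simp add: null_sets_def emeasure_eq_measure)
    then have "AE \<omega> in M. \<omega> \<notin> B"
      by (rule AE_not_in)
    then have "AE \<omega> in M. W \<omega> * (indicator A \<omega> - indicator B \<omega>) = 0"
      by eventually_elim (simp add: True)
    then show ?thesis
      by (simp add: integral_eq_zero_AE)
  next
    case False
    define m where "m = Inf (W ` A)"
    have A_space: "A \<subseteq> space M"
      using sets.sets_into_space[OF \<open>A \<in> sets M\<close>] .
    have bdd: "bdd_below (W ` A)"
      using A_space nonneg by (intro bdd_belowI2[where m = 0]) auto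
    have "0 \<le> m"
      unfolding m_def using False A_space nonneg by (intro cINF_greatest) auto
    have m_le: "m \<le> W \<omega>" if "\<omega> \<in> A" for \<omega>
      unfolding m_def using that bdd by (auto intro: cINF_lower)
    have le_m: "W \<omega>' \<le> m" if "\<omega>' \<in> space M - A" for \<omega>'
      unfolding m_def using that False by (auto intro: cINF_greatest heavy)
    have indicators: "integrable M (indicator A :: _ \<Rightarrow> real)" "integrable M (indicator B :: _ \<Rightarrow> real)"
      by (auto intro!: integrable_real_indicator simp: less_top[symmetric])
    have "0 \<le> m * (measure M A - measure M B)"
      using \<open>0 \<le> m\<close> measure_le by simp
    also have "\<dots> = (\<integral>\<omega>. m * (indicator A \<omega> - indicator B \<omega>) \<partial>M)"
      by (simp add: Bochner_Integration.integral_diff[OF indicators])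
    also have "\<dots> \<le> (\<integral>\<omega>. W \<omega> * (indicator A \<omega> - indicator B \<omega>) \<partial>M)"
    proof (rule integral_mono[OF _ integrable])
      show "integrable M (\<lambda>\<omega>. m * (indicator A \<omega> - indicator B \<omega>))"
        by (intro integrable_mult_right Bochner_Integration.integrable_diff indicators)
      fix \<omega> assume "\<omega> \<in> space M"
      then show "m * (indicator A \<omega> - indicator B \<omega>) \<le> W \<omega> * (indicator A \<omega> - indicator B \<omega>)"
        using m_le le_m by (cases "\<omega> \<in> A"; cases "\<omega> \<in> B") auto
    qed
    finally show ?thesis .
  qed
qed

section \<open>Quantile functions\<close>

lemma quantile_le_iff:
  assumes "real_distribution N" and v: "0 < v" "v < 1"
  shows "quantile (cdf N) v \<le> t \<longleftrightarrow> v \<le> cdf N t"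
proof -
  interpret real_distribution N by fact
  define S where "S = {y. v \<le> cdf N y}"
  have "\<forall>\<^sub>F y in at_top. v < cdf N y"
    using order_tendstoD(1)[OF cdf_lim_at_top_prob v(2)] .
  then have "S \<noteq> {}"
    by (auto simp: S_def eventually_at_top_linorder dest: less_imp_le)
  have "\<forall>\<^sub>F y in at_bot. cdf N y < v"
    using order_tendstoD(2)[OF cdf_lim_at_bot v(1)] .
  then obtain y0 where y0: "\<And>y. y \<le> y0 \<Longrightarrow> cdf N y < v"
    by (auto simp: eventually_at_bot_linorder)
  have bdd: "bdd_below S"
  proof (rule bdd_belowI)
    fix y
    assume "y \<in> S"
    then show "y0 \<le> y"
      using y0[of y] by (force simp: S_def)
  qed
  text \<open>Right continuity of the distribution function makes the infimum attained.\<close>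
  have "v \<le> cdf N (Inf S)"
  proof (rule ccontr)
    assume "\<not> v \<le> cdf N (Inf S)"
    then have "\<forall>\<^sub>F y in at_right (Inf S). cdf N y < v"
      using cdf_is_right_cont[of "Inf S"] unfolding continuous_within
      by (intro order_tendstoD(2)) auto
    then obtain d where "Inf S < d" and d: "\<And>y. Inf S < y \<Longrightarrow> y < d \<Longrightarrow> cdf N y < v"
      by (auto simp: eventually_at_right_field)
    then obtain y where "y \<in> S" "y < d"
      using cInf_less_iff[OF \<open>S \<noteq> {}\<close> bdd] by auto
    then have "v \<le> cdf N y" "Inf S \<le> y"
      using cInf_lower[OF _ bdd] by (auto simp: S_def)
    with d[of y] \<open>y < d\<close> \<open>\<not> v \<le> cdf N (Inf S)\<close> show False
      by (cases "Inf S < y") auto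
  qed
  moreover have "quantile (cdf N) v = Inf S"
    by (simp add: quantile_def S_def)
  ultimately show ?thesis
    using cdf_nondecreasing[of "Inf S" t] cInf_lower[OF _ bdd, of t] by (auto simp: S_def)
qed

lemma less_quantile_iff:
  "real_distribution N \<Longrightarrow> 0 < v \<Longrightarrow> v < 1 \<Longrightarrow> t < quantile (cdf N) v \<longleftrightarrow> cdf N t < v"
  using quantile_le_iff[of N v t] by linarith

lemma quantile_mono_on:
  assumes "real_distribution N"
  shows "mono_on {0<..<1} (quantile (cdf N))"
proof (rule mono_onI)
  fix u v :: real
  assume "u \<in> {0<..<1}" "v \<in> {0<..<1}" "u \<le> v"
  then show "quantile (cdf N) u \<le> quantile (cdf N) v"
    using quantile_le_iff[OF assms, of u] quantile_le_iff[OF assms, of v] by force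
qed

lemma borel_measurable_quantile:
  assumes "real_distribution N"
  shows "quantile (cdf N) \<in> borel_measurable borel"
proof (rule borel_measurable_piecewise_mono[of "{{..0}, {0<..<1}, {1}, {1<..}}"])
  interpret real_distribution N by fact
  show "\<Union> {{..0}, {0<..<1}, {1}, {1<..}} = (UNIV :: real set)"
    by (auto simp: not_le)
  text \<open>Outside \<open>(0, 1)\<close> the quantile is the constant \<open>Inf UNIV\<close> or \<open>Inf {}\<close>.\<close>
  have "{y. u \<le> cdf N y} = UNIV" if "u \<le> 0" for u
    using that cdf_nonneg order_trans by blast
  then have "mono_on {..0} (quantile (cdf N))"
    by (intro mono_onI) (simp add: quantile_def)
  moreover have "{y. u \<le> cdf N y} = {}" if "1 < u" for u
    using that cdf_bounded_prob by (auto simp: not_le intro: le_less_trans)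
  then have "mono_on {1<..} (quantile (cdf N))"
    by (intro mono_onI) (simp add: quantile_def)
  moreover have "mono_on {1} (quantile (cdf N))"
    by (rule mono_onI) simp
  ultimately show "mono_on c (quantile (cdf N))" if "c \<in> {{..0}, {0<..<1}, {1}, {1<..}}" for c
    using that quantile_mono_on[OF assms] by blast
qed auto

section \<open>Quantile couplings\<close>

lemma uniform_integral_indicator:
  fixes U :: "'a \<Rightarrow> real" and h :: "real \<Rightarrow> real"
  assumes [measurable]: "U \<in> borel_measurable M" "h \<in> borel_measurable borel" "S \<in> sets borel"
    and uniform: "distr M lborel U = uniform_measure lborel {0..1}" and "S \<subseteq> {0..1}"
  shows "integrable M (\<lambda>\<omega>. h (U \<omega>) * indicator S (U \<omega>)) \<longleftrightarrow> set_integrable lborel S h"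
    and "(\<integral>\<omega>. h (U \<omega>) * indicator S (U \<omega>) \<partial>M) = (LINT u:S|lborel. h u)"
proof -
  have density: "distr M lborel U = density lborel (\<lambda>u. ennreal (indicator {0..1} u))"
    unfolding uniform uniform_measure_def by (simp add: ennreal_indicator divide_ennreal_def)
  have restrict: "(\<lambda>u. indicator {0..1} u *\<^sub>R (h u * indicator S u)) = (\<lambda>u. indicator S u *\<^sub>R h u)"
    using \<open>S \<subseteq> {0..1}\<close> by (auto simp: indicator_def fun_eq_iff)
  have U: "U \<in> M \<rightarrow>\<^sub>M lborel"
    by simp
  have "integrable M (\<lambda>\<omega>. h (U \<omega>) * indicator S (U \<omega>))
      \<longleftrightarrow> integrable (distr M lborel U) (\<lambda>u. h u * indicator S u)"
    by (rule integrable_distr_eq[OF U, symmetric]) simp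
  also have "\<dots> \<longleftrightarrow> set_integrable lborel S h"
    unfolding density set_integrable_def restrict[symmetric] by (rule integrable_density) auto
  finally show "integrable M (\<lambda>\<omega>. h (U \<omega>) * indicator S (U \<omega>)) \<longleftrightarrow> set_integrable lborel S h" .
  have "(\<integral>\<omega>. h (U \<omega>) * indicator S (U \<omega>) \<partial>M) = (\<integral>u. h u * indicator S u \<partial>distr M lborel U)"
    by (rule integral_distr[OF U, symmetric]) simp
  also have "\<dots> = (LINT u:S|lborel. h u)"
    unfolding density set_lebesgue_integral_def restrict[symmetric] by (rule integral_density) auto
  finally show "(\<integral>\<omega>. h (U \<omega>) * indicator S (U \<omega>) \<partial>M) = (LINT u:S|lborel. h u)" .
qed

lemma fmeasurable_Ioo_Int:
  "J \<in> sets borel \<Longrightarrow> {a<..<b::real} \<inter> J \<in> fmeasurable lborel"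
  using fmeasurable_Int_fmeasurable[OF fmeasurable_box[of a b]] by (simp add: box_real)

lemma min_le_measure_Ioo_Int_lower:
  assumes "a < b" "0 \<le> p" "{a<..<a + p} \<subseteq> J" "J \<in> sets borel"
  shows "min (b - a) p \<le> measure lborel ({a<..<b} \<inter> J)"
proof -
  have "min (b - a) p = measure lborel {a<..<min b (a + p)}"
    using assms by (simp add: min_def)
  also have "\<dots> \<le> measure lborel ({a<..<b} \<inter> J)"
    by (rule measure_mono_fmeasurable) (use assms fmeasurable_Ioo_Int in auto)
  finally show ?thesis .
qed

lemma min_le_measure_Ioo_Int_upper:
  assumes "a < b" "0 \<le> p" "{b - p<..<b} \<subseteq> J" "J \<in> sets borel"
  shows "min (b - a) p \<le> measure lborel ({a<..<b} \<inter> J)"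
proof -
  have "min (b - a) p = measure lborel {max a (b - p)<..<b}"
    using assms by (simp add: min_def max_def)
  also have "\<dots> \<le> measure lborel ({a<..<b} \<inter> J)"
    by (rule measure_mono_fmeasurable) (use assms fmeasurable_Ioo_Int in auto)
  finally show ?thesis .
qed

locale quantile_coupling = prob_space M for M :: "'a measure" +
  fixes Y0 Y1 U :: "'a \<Rightarrow> real" and a b :: real
  assumes measurable_Y0 [measurable]: "Y0 \<in> borel_measurable M"
    and measurable_Y1 [measurable]: "Y1 \<in> borel_measurable M"
    and measurable_U [measurable]: "U \<in> borel_measurable M"
    and uniform_U: "distr M lborel U = uniform_measure lborel {0..1}"
    and coupling: "AE \<omega> in M. Y0 \<omega> = quantile (cdf (distr M borel Y0)) (U \<omega>)"
    and interval: "0 \<le> a" "a < b" "b \<le> 1"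
begin

abbreviation "Q0 \<equiv> quantile (cdf (distr M borel Y0))"
abbreviation "F1 \<equiv> cdf (distr M borel Y1)"
abbreviation "Q1 \<equiv> quantile F1"

lemma real_distribution_Y0: "real_distribution (distr M borel Y0)"
  and real_distribution_Y1: "real_distribution (distr M borel Y1)"
  by (simp_all add: real_distribution_distr)

lemma borel_measurable_Q0 [measurable]: "Q0 \<in> borel_measurable borel"
  and borel_measurable_Q1 [measurable]: "Q1 \<in> borel_measurable borel"
  by (simp_all add: borel_measurable_quantile real_distribution_Y0 real_distribution_Y1)

lemma Q0_mono: "u \<in> {a<..<b} \<Longrightarrow> v \<in> {a<..<b} \<Longrightarrow> u \<le> v \<Longrightarrow> Q0 u \<le> Q0 v"
  using quantile_mono_on[OF real_distribution_Y0] interval by (auto intro: mono_onD)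

lemma less_Q1_iff: "0 < v \<Longrightarrow> v < 1 \<Longrightarrow> t < Q1 v \<longleftrightarrow> F1 t < v"
  by (rule less_quantile_iff[OF real_distribution_Y1])

lemma F1_nonneg: "0 \<le> F1 t"
  and F1_le_1: "F1 t \<le> 1"
  using real_distribution.cdf_bounded_prob[OF real_distribution_Y1] by (auto simp: cdf_def)

lemma measure_Y1_greaterThan: "measure (distr M borel Y1) {t<..} = 1 - F1 t"
proof -
  have "measure (distr M borel Y1) (space (distr M borel Y1) - {..t}) = 1 - F1 t"
    unfolding cdf_def by (rule prob_space.prob_compl) (simp_all add: prob_space_distr)
  moreover have "space (distr M borel Y1) - {..t} = {t<..}"
    by auto
  ultimately show ?thesis
    by simp
qed

lemma prob_U_in:
  assumes "X \<in> sets borel" "X \<subseteq> {0..1}"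
  shows "prob {\<omega> \<in> space M. U \<omega> \<in> X} = measure lborel X"
proof -
  have "prob {\<omega> \<in> space M. U \<omega> \<in> X} = measure (distr M lborel U) X"
    using assms by (subst measure_distr) (auto simp: vimage_def Int_def conj_commute)
  also have "\<dots> = measure lborel X"
    unfolding uniform_U using assms by (subst measure_uniform_measure) (auto simp: Int_absorb1)
  finally show ?thesis .
qed

lemma expectation_minus_quantile_integral_eq:
  fixes \<phi> r :: "real \<Rightarrow> real"
  assumes cvx: "convex_on UNIV \<phi>" and monotone: "mono \<phi> \<or> antimono \<phi>"
    and [measurable]: "r \<in> borel_measurable borel"
    and integrable_quantiles: "set_integrable lborel {a<..<b} (\<lambda>u. \<phi> (r u - Q0 u))"
    and integrable_Y: "integrable M (\<lambda>\<omega>. \<phi> (Y1 \<omega> - Y0 \<omega>) * indicator {a<..<b} (U \<omega>))"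
  shows "(\<integral>\<omega>. \<phi> (Y1 \<omega> - Y0 \<omega>) * indicator {a<..<b} (U \<omega>) \<partial>M) - (LINT u:{a<..<b}|lborel. \<phi> (r u - Q0 u))
    = (\<integral>t. (\<integral>\<omega>. indicator {a<..<b} (U \<omega>) *
          ((of_bool (t < Y1 \<omega>) - of_bool (t < r (U \<omega>))) * right_deriv \<phi> (t - Q0 (U \<omega>))) \<partial>M) \<partial>lborel)"
proof -
  have [measurable]: "\<phi> \<in> borel_measurable borel"
    using convex_on_continuous[OF open_UNIV cvx] by (rule borel_measurable_continuous_onI)
  have "{a<..<b} \<subseteq> {0..1}"
    using interval by auto
  note uniform = uniform_integral_indicator[OF measurable_U _ _ uniform_U this, of "\<lambda>u. \<phi> (r u - Q0 u)"]
  have integrable_U: "integrable M (\<lambda>\<omega>. \<phi> (r (U \<omega>) - Q0 (U \<omega>)) * indicator {a<..<b} (U \<omega>))"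
    using uniform(1) integrable_quantiles by simp
  then have integrable_diff: "integrable M (\<lambda>\<omega>. \<phi> (Y1 \<omega> - Y0 \<omega>) * indicator {a<..<b} (U \<omega>)
      - \<phi> (r (U \<omega>) - Q0 (U \<omega>)) * indicator {a<..<b} (U \<omega>))"
    using integrable_Y by auto
  have AE_eq: "AE \<omega> in M. \<phi> (Y1 \<omega> - Y0 \<omega>) * indicator {a<..<b} (U \<omega>)
      - \<phi> (r (U \<omega>) - Q0 (U \<omega>)) * indicator {a<..<b} (U \<omega>)
      = indicator {a<..<b} (U \<omega>) * (\<phi> (Y1 \<omega> - Q0 (U \<omega>)) - \<phi> (r (U \<omega>) - Q0 (U \<omega>)))"
    using coupling by eventually_elim (simp add: algebra_simps)
  have "(\<integral>\<omega>. \<phi> (Y1 \<omega> - Y0 \<omega>) * indicator {a<..<b} (U \<omega>) \<partial>M) - (LINT u:{a<..<b}|lborel. \<phi> (r u - Q0 u))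
      = (\<integral>\<omega>. \<phi> (Y1 \<omega> - Y0 \<omega>) * indicator {a<..<b} (U \<omega>)
          - \<phi> (r (U \<omega>) - Q0 (U \<omega>)) * indicator {a<..<b} (U \<omega>) \<partial>M)"
    using uniform(2) Bochner_Integration.integral_diff[OF integrable_Y integrable_U] by simp
  also have "\<dots> = (\<integral>\<omega>. indicator {a<..<b} (U \<omega>) * (\<phi> (Y1 \<omega> - Q0 (U \<omega>)) - \<phi> (r (U \<omega>) - Q0 (U \<omega>))) \<partial>M)"
    by (rule integral_cong_AE) (use AE_eq in auto)
  also have "\<dots> = (\<integral>t. (\<integral>\<omega>. indicator {a<..<b} (U \<omega>) *
          ((of_bool (t < Y1 \<omega>) - of_bool (t < r (U \<omega>))) * right_deriv \<phi> (t - Q0 (U \<omega>))) \<partial>M) \<partial>lborel)"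
  proof (rule integral_convex_increment_eq_integral_right_deriv[OF _ _ _ _ _ cvx monotone])
    show "integrable M (\<lambda>\<omega>. indicator {a<..<b} (U \<omega>) * (\<phi> (Y1 \<omega> - Q0 (U \<omega>)) - \<phi> (r (U \<omega>) - Q0 (U \<omega>))))"
      by (rule integrable_cong_AE_imp[OF integrable_diff _ AE_eq]) measurable
  qed (auto intro: prob_space_imp_sigma_finite prob_space_axioms)
  finally show ?thesis .
qed

lemma bathtub_integral_nonneg_uniform:
  fixes w :: "real \<Rightarrow> real"
  assumes [measurable]: "J \<in> sets borel" "T \<in> sets borel"
    and nonneg: "\<And>u. u \<in> {a<..<b} \<Longrightarrow> 0 \<le> w u"
    and heavy: "\<And>u v. u \<in> {a<..<b} \<inter> J \<Longrightarrow> v \<in> {a<..<b} - J \<Longrightarrow> w v \<le> w u"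
    and size: "min (b - a) (measure (distr M borel Y1) T) \<le> measure lborel ({a<..<b} \<inter> J)"
  shows "0 \<le> (\<integral>\<omega>. indicator {a<..<b} (U \<omega>) * w (U \<omega>) * (indicator J (U \<omega>) - indicator T (Y1 \<omega>)) \<partial>M)"
proof -
  have unit: "{a<..<b} \<subseteq> {0..1}" "{a<..<b} \<inter> J \<subseteq> {0..1}"
    using interval by auto
  define A where "A = {\<omega> \<in> space M. U \<omega> \<in> {a<..<b} \<inter> J}"
  define B where "B = {\<omega> \<in> space M. U \<omega> \<in> {a<..<b} \<and> Y1 \<omega> \<in> T}"
  have [measurable]: "A \<in> sets M" "B \<in> sets M"
    unfolding A_def B_def by measurable
  have "measure M B \<le> min (prob {\<omega> \<in> space M. U \<omega> \<in> {a<..<b}}) (prob {\<omega> \<in> space M. Y1 \<omega> \<in> T})"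
    unfolding B_def by (intro min.boundedI finite_measure_mono) auto
  also have "\<dots> = min (b - a) (measure (distr M borel Y1) T)"
  proof -
    have "prob {\<omega> \<in> space M. U \<omega> \<in> {a<..<b}} = b - a"
      using prob_U_in[OF _ unit(1)] interval by simp
    then show ?thesis
      by (simp add: measure_distr vimage_def Int_def conj_commute)
  qed
  also have "\<dots> \<le> measure M A"
    using size prob_U_in[OF _ unit(2)] by (simp add: A_def)
  finally have "measure M B \<le> measure M A" .
  have "0 \<le> (\<integral>\<omega>. indicator {a<..<b} (U \<omega>) * w (U \<omega>) * (indicator A \<omega> - indicator B \<omega>) \<partial>M)"
  proof (rule bathtub_integral_nonneg[OF finite_measure_axioms _ _ _ _ \<open>measure M B \<le> measure M A\<close>])
    show "0 \<le> indicator {a<..<b} (U \<omega>) * w (U \<omega>)" for \<omega>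
      using nonneg by (simp add: indicator_def)
    show "indicator {a<..<b} (U \<omega>') * w (U \<omega>') \<le> indicator {a<..<b} (U \<omega>) * w (U \<omega>)"
      if "\<omega> \<in> A" "\<omega>' \<in> space M - A" for \<omega> \<omega>'
      using that nonneg[of "U \<omega>"] heavy[of "U \<omega>" "U \<omega>'"] by (auto simp: A_def indicator_def)
  qed simp_all
  also have "\<dots> = (\<integral>\<omega>. indicator {a<..<b} (U \<omega>) * w (U \<omega>) * (indicator J (U \<omega>) - indicator T (Y1 \<omega>)) \<partial>M)"
    by (intro Bochner_Integration.integral_cong) (auto simp: A_def B_def indicator_def)
  finally show ?thesis .
qed

lemma mono_convex_lower_bound:
  assumes "mono f" and cvx: "convex_on UNIV f"
    and "set_integrable lborel {a<..<b} (\<lambda>u. f (Q1 (u - a) - Q0 u))"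
    and "integrable M (\<lambda>\<omega>. f (Y1 \<omega> - Y0 \<omega>) * indicator {a<..<b} (U \<omega>))"
  shows "(LINT u:{a<..<b}|lborel. f (Q1 (u - a) - Q0 u)) \<le> (\<integral>\<omega>. f (Y1 \<omega> - Y0 \<omega>) * indicator {a<..<b} (U \<omega>) \<partial>M)"
proof -
  have "0 \<le> (\<integral>\<omega>. indicator {a<..<b} (U \<omega>) *
      ((of_bool (t < Y1 \<omega>) - of_bool (t < Q1 (U \<omega> - a))) * right_deriv f (t - Q0 (U \<omega>))) \<partial>M)" for t
  proof -
    have "0 \<le> (\<integral>\<omega>. indicator {a<..<b} (U \<omega>) * right_deriv f (t - Q0 (U \<omega>))
        * (indicator {..a + F1 t} (U \<omega>) - indicator {..t} (Y1 \<omega>)) \<partial>M)"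
    proof (rule bathtub_integral_nonneg_uniform)
      show "min (b - a) (measure (distr M borel Y1) {..t}) \<le> measure lborel ({a<..<b} \<inter> {..a + F1 t})"
        using interval F1_nonneg by (intro min_le_measure_Ioo_Int_lower) (auto simp: cdf_def)
      show "right_deriv f (t - Q0 v) \<le> right_deriv f (t - Q0 u)"
        if "u \<in> {a<..<b} \<inter> {..a + F1 t}" "v \<in> {a<..<b} - {..a + F1 t}" for u v
        using that by (intro monoD[OF mono_right_deriv[OF cvx]] diff_left_mono Q0_mono) auto
    qed (auto intro: right_deriv_nonneg[OF cvx \<open>mono f\<close>])
    also have "\<dots> = (\<integral>\<omega>. indicator {a<..<b} (U \<omega>) *
      ((of_bool (t < Y1 \<omega>) - of_bool (t < Q1 (U \<omega> - a))) * right_deriv f (t - Q0 (U \<omega>))) \<partial>M)"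
      using interval by (intro Bochner_Integration.integral_cong) (auto simp: indicator_def less_Q1_iff)
    finally show ?thesis .
  qed
  then have "0 \<le> (\<integral>t. (\<integral>\<omega>. indicator {a<..<b} (U \<omega>) *
      ((of_bool (t < Y1 \<omega>) - of_bool (t < Q1 (U \<omega> - a))) * right_deriv f (t - Q0 (U \<omega>))) \<partial>M) \<partial>lborel)"
    by (rule Bochner_Integration.integral_nonneg)
  with expectation_minus_quantile_integral_eq[OF cvx _ _ assms(3,4)] \<open>mono f\<close> show ?thesis
    by simp
qed

lemma mono_convex_upper_bound:
  assumes "mono f" and cvx: "convex_on UNIV f"
    and "integrable M (\<lambda>\<omega>. f (Y1 \<omega> - Y0 \<omega>) * indicator {a<..<b} (U \<omega>))"
    and "set_integrable lborel {a<..<b} (\<lambda>u. f (Q1 (1 - u + a) - Q0 u))"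
  shows "(\<integral>\<omega>. f (Y1 \<omega> - Y0 \<omega>) * indicator {a<..<b} (U \<omega>) \<partial>M) \<le> (LINT u:{a<..<b}|lborel. f (Q1 (1 - u + a) - Q0 u))"
proof -
  have "0 \<le> - (\<integral>\<omega>. indicator {a<..<b} (U \<omega>) *
      ((of_bool (t < Y1 \<omega>) - of_bool (t < Q1 (1 - U \<omega> + a))) * right_deriv f (t - Q0 (U \<omega>))) \<partial>M)" for t
  proof -
    have "0 \<le> (\<integral>\<omega>. indicator {a<..<b} (U \<omega>) * right_deriv f (t - Q0 (U \<omega>))
        * (indicator {..<a + (1 - F1 t)} (U \<omega>) - indicator {t<..} (Y1 \<omega>)) \<partial>M)"
    proof (rule bathtub_integral_nonneg_uniform)
      show "min (b - a) (measure (distr M borel Y1) {t<..}) \<le> measure lborel ({a<..<b} \<inter> {..<a + (1 - F1 t)})"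
        using interval F1_le_1 by (intro min_le_measure_Ioo_Int_lower) (auto simp: measure_Y1_greaterThan)
      show "right_deriv f (t - Q0 v) \<le> right_deriv f (t - Q0 u)"
        if "u \<in> {a<..<b} \<inter> {..<a + (1 - F1 t)}" "v \<in> {a<..<b} - {..<a + (1 - F1 t)}" for u v
        using that by (intro monoD[OF mono_right_deriv[OF cvx]] diff_left_mono Q0_mono) auto
    qed (auto intro: right_deriv_nonneg[OF cvx \<open>mono f\<close>])
    also have "\<dots> = - (\<integral>\<omega>. indicator {a<..<b} (U \<omega>) *
      ((of_bool (t < Y1 \<omega>) - of_bool (t < Q1 (1 - U \<omega> + a))) * right_deriv f (t - Q0 (U \<omega>))) \<partial>M)"
      unfolding Bochner_Integration.integral_minus[symmetric] using interval
      by (intro Bochner_Integration.integral_cong) (auto simp: indicator_def less_Q1_iff)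
    finally show ?thesis .
  qed
  then have "0 \<le> - (\<integral>t. (\<integral>\<omega>. indicator {a<..<b} (U \<omega>) *
      ((of_bool (t < Y1 \<omega>) - of_bool (t < Q1 (1 - U \<omega> + a))) * right_deriv f (t - Q0 (U \<omega>))) \<partial>M) \<partial>lborel)"
    unfolding Bochner_Integration.integral_minus[symmetric] by (rule Bochner_Integration.integral_nonneg)
  with expectation_minus_quantile_integral_eq[OF cvx _ _ assms(4,3)] \<open>mono f\<close> show ?thesis
    by simp
qed

lemma antimono_convex_lower_bound:
  assumes "antimono g" and cvx: "convex_on UNIV g"
    and "set_integrable lborel {a<..<b} (\<lambda>u. g (Q1 (1 - b + u) - Q0 u))"
    and "integrable M (\<lambda>\<omega>. g (Y1 \<omega> - Y0 \<omega>) * indicator {a<..<b} (U \<omega>))"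
  shows "(LINT u:{a<..<b}|lborel. g (Q1 (1 - b + u) - Q0 u)) \<le> (\<integral>\<omega>. g (Y1 \<omega> - Y0 \<omega>) * indicator {a<..<b} (U \<omega>) \<partial>M)"
proof -
  have "0 \<le> (\<integral>\<omega>. indicator {a<..<b} (U \<omega>) *
      ((of_bool (t < Y1 \<omega>) - of_bool (t < Q1 (1 - b + U \<omega>))) * right_deriv g (t - Q0 (U \<omega>))) \<partial>M)" for t
  proof -
    have "0 \<le> (\<integral>\<omega>. indicator {a<..<b} (U \<omega>) * - right_deriv g (t - Q0 (U \<omega>))
        * (indicator {b - (1 - F1 t)<..} (U \<omega>) - indicator {t<..} (Y1 \<omega>)) \<partial>M)"
    proof (rule bathtub_integral_nonneg_uniform)
      show "min (b - a) (measure (distr M borel Y1) {t<..}) \<le> measure lborel ({a<..<b} \<inter> {b - (1 - F1 t)<..})"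
        using interval F1_le_1 by (intro min_le_measure_Ioo_Int_upper) (auto simp: measure_Y1_greaterThan)
      show "- right_deriv g (t - Q0 v) \<le> - right_deriv g (t - Q0 u)"
        if "u \<in> {a<..<b} \<inter> {b - (1 - F1 t)<..}" "v \<in> {a<..<b} - {b - (1 - F1 t)<..}" for u v
        using that by (intro le_imp_neg_le monoD[OF mono_right_deriv[OF cvx]] diff_left_mono Q0_mono) auto
    qed (auto intro: right_deriv_nonpos[OF cvx \<open>antimono g\<close>])
    also have "\<dots> = (\<integral>\<omega>. indicator {a<..<b} (U \<omega>) *
      ((of_bool (t < Y1 \<omega>) - of_bool (t < Q1 (1 - b + U \<omega>))) * right_deriv g (t - Q0 (U \<omega>))) \<partial>M)"
      using interval by (intro Bochner_Integration.integral_cong) (auto simp: indicator_def less_Q1_iff)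
    finally show ?thesis .
  qed
  then have "0 \<le> (\<integral>t. (\<integral>\<omega>. indicator {a<..<b} (U \<omega>) *
      ((of_bool (t < Y1 \<omega>) - of_bool (t < Q1 (1 - b + U \<omega>))) * right_deriv g (t - Q0 (U \<omega>))) \<partial>M) \<partial>lborel)"
    by (rule Bochner_Integration.integral_nonneg)
  with expectation_minus_quantile_integral_eq[OF cvx _ _ assms(3,4)] \<open>antimono g\<close> show ?thesis
    by simp
qed

lemma antimono_convex_upper_bound:
  assumes "antimono g" and cvx: "convex_on UNIV g"
    and "integrable M (\<lambda>\<omega>. g (Y1 \<omega> - Y0 \<omega>) * indicator {a<..<b} (U \<omega>))"
    and "set_integrable lborel {a<..<b} (\<lambda>u. g (Q1 (b - u) - Q0 u))"
  shows "(\<integral>\<omega>. g (Y1 \<omega> - Y0 \<omega>) * indicator {a<..<b} (U \<omega>) \<partial>M) \<le> (LINT u:{a<..<b}|lborel. g (Q1 (b - u) - Q0 u))"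
proof -
  have "0 \<le> - (\<integral>\<omega>. indicator {a<..<b} (U \<omega>) *
      ((of_bool (t < Y1 \<omega>) - of_bool (t < Q1 (b - U \<omega>))) * right_deriv g (t - Q0 (U \<omega>))) \<partial>M)" for t
  proof -
    have "0 \<le> (\<integral>\<omega>. indicator {a<..<b} (U \<omega>) * - right_deriv g (t - Q0 (U \<omega>))
        * (indicator {b - F1 t..} (U \<omega>) - indicator {..t} (Y1 \<omega>)) \<partial>M)"
    proof (rule bathtub_integral_nonneg_uniform)
      show "min (b - a) (measure (distr M borel Y1) {..t}) \<le> measure lborel ({a<..<b} \<inter> {b - F1 t..})"
        using interval F1_nonneg by (intro min_le_measure_Ioo_Int_upper) (auto simp: cdf_def)
      show "- right_deriv g (t - Q0 v) \<le> - right_deriv g (t - Q0 u)"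
        if "u \<in> {a<..<b} \<inter> {b - F1 t..}" "v \<in> {a<..<b} - {b - F1 t..}" for u v
        using that by (intro le_imp_neg_le monoD[OF mono_right_deriv[OF cvx]] diff_left_mono Q0_mono) auto
    qed (auto intro: right_deriv_nonpos[OF cvx \<open>antimono g\<close>])
    also have "\<dots> = - (\<integral>\<omega>. indicator {a<..<b} (U \<omega>) *
      ((of_bool (t < Y1 \<omega>) - of_bool (t < Q1 (b - U \<omega>))) * right_deriv g (t - Q0 (U \<omega>))) \<partial>M)"
      unfolding Bochner_Integration.integral_minus[symmetric] using interval
      by (intro Bochner_Integration.integral_cong) (auto simp: indicator_def less_Q1_iff)
    finally show ?thesis .
  qed
  then have "0 \<le> - (\<integral>t. (\<integral>\<omega>. indicator {a<..<b} (U \<omega>) *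
      ((of_bool (t < Y1 \<omega>) - of_bool (t < Q1 (b - U \<omega>))) * right_deriv g (t - Q0 (U \<omega>))) \<partial>M) \<partial>lborel)"
    unfolding Bochner_Integration.integral_minus[symmetric] by (rule Bochner_Integration.integral_nonneg)
  with expectation_minus_quantile_integral_eq[OF cvx _ _ assms(4,3)] \<open>antimono g\<close> show ?thesis
    by simp
qed

end

theorem lemmaA2:
  fixes M :: "'a measure"
    and Y0 Y1 U :: "'a \<Rightarrow> real"
    and f g :: "real \<Rightarrow> real"
    and a b :: real
  defines "Q0 \<equiv> quantile (cdf (distr M borel Y0))"
      and "Q1 \<equiv> quantile (cdf (distr M borel Y1))"
  assumes "prob_space M"
    and "Y0 \<in> borel_measurable M" and "Y1 \<in> borel_measurable M" and "U \<in> borel_measurable M"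
    and "distr M lborel U = uniform_measure lborel {0..1}"
    and "AE \<omega> in M. Y0 \<omega> = Q0 (U \<omega>)"
    and "mono f" and "convex_on UNIV f"
    and "antimono g" and "convex_on UNIV g"
    and "0 \<le> a" and "a < b" and "b \<le> 1"
  shows
    "(set_integrable lborel {a<..<b} (\<lambda>u. f (Q1 (u - a) - Q0 u)) \<and>
      integrable M (\<lambda>\<omega>. f (Y1 \<omega> - Y0 \<omega>) * indicator {a<..<b} (U \<omega>)) \<longrightarrow>
      (LINT u:{a<..<b}|lborel. f (Q1 (u - a) - Q0 u))
        \<le> (\<integral>\<omega>. f (Y1 \<omega> - Y0 \<omega>) * indicator {a<..<b} (U \<omega>) \<partial>M))
   \<and> (integrable M (\<lambda>\<omega>. f (Y1 \<omega> - Y0 \<omega>) * indicator {a<..<b} (U \<omega>)) \<and>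
      set_integrable lborel {a<..<b} (\<lambda>u. f (Q1 (1 - u + a) - Q0 u)) \<longrightarrow>
      (\<integral>\<omega>. f (Y1 \<omega> - Y0 \<omega>) * indicator {a<..<b} (U \<omega>) \<partial>M)
        \<le> (LINT u:{a<..<b}|lborel. f (Q1 (1 - u + a) - Q0 u)))
   \<and> (set_integrable lborel {a<..<b} (\<lambda>u. g (Q1 (1 - b + u) - Q0 u)) \<and>
      integrable M (\<lambda>\<omega>. g (Y1 \<omega> - Y0 \<omega>) * indicator {a<..<b} (U \<omega>)) \<longrightarrow>
      (LINT u:{a<..<b}|lborel. g (Q1 (1 - b + u) - Q0 u))
        \<le> (\<integral>\<omega>. g (Y1 \<omega> - Y0 \<omega>) * indicator {a<..<b} (U \<omega>) \<partial>M))
   \<and> (integrable M (\<lambda>\<omega>. g (Y1 \<omega> - Y0 \<omega>) * indicator {a<..<b} (U \<omega>)) \<and>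
      set_integrable lborel {a<..<b} (\<lambda>u. g (Q1 (b - u) - Q0 u)) \<longrightarrow>
      (\<integral>\<omega>. g (Y1 \<omega> - Y0 \<omega>) * indicator {a<..<b} (U \<omega>) \<partial>M)
        \<le> (LINT u:{a<..<b}|lborel. g (Q1 (b - u) - Q0 u)))"
proof -
  interpret quantile_coupling M Y0 Y1 U a b
    by (intro quantile_coupling.intro quantile_coupling_axioms.intro)
      (use assms in \<open>simp_all add: Q0_def\<close>)
  show ?thesis
    unfolding Q0_def Q1_def
    using mono_convex_lower_bound[OF assms(9,10)] mono_convex_upper_bound[OF assms(9,10)]
      antimono_convex_lower_bound[OF assms(11,12)] antimono_convex_upper_bound[OF assms(11,12)]
    by blast
qed

end
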